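(* Let $\Re$ be a commutative Krasner hyperring with identity $1\ne 0$, let $\phi:L(\Re)\to L(\Re)\cup\{\emptyset\}$ be a function, and let $T$ be a proper hyperideal of $\Re$ that is $\phi$-prime. If $T$ is not prime, then $T^2\subseteq\phi(T)$. Equivalently, if $T^2\not\subseteq\phi(T)$, then $T$ is prime.
   Context: Krasner hyperring: $(\Re,\oplus)$ canonical hypergroup (associative commutative hyperoperation, scalar zero $0$, unique inverses, reversibility), $(\Re,\circ)$ commutative semigroup with identity $1\ne0$, $0$ absorbing, $\circ$ distributive over $\oplus$. Hyperideals: nonempty $N$ with $a\oplus(-b)\subseteq N$, $r\circ a\in N$; $L(\Re)$ is the set of hyperideals; $T^2$ is the hyperideal generated by $\{a\circ b: a,b\in T\}$. $T$ is prime if $a\circ b\in T$ implies $a\in T$ or $b\in T$; $T$ is $\phi$-prime if $a\circ b\in T$ and $a\circ b\notin\phi(T)$ imply $a\in T$ or $b\in T$. *)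

theory Defs
  imports Main
begin

record 'a hyperring =
  hr_carrier :: "'a set"
  hr_add :: "'a \<Rightarrow> 'a \<Rightarrow> 'a set"
  hr_mult :: "'a \<Rightarrow> 'a \<Rightarrow> 'a"
  hr_zero :: "'a"
  hr_one :: "'a"
  hr_neg :: "'a \<Rightarrow> 'a"

definition hr_add_set :: "('a, 'b) hyperring_scheme \<Rightarrow> 'a set \<Rightarrow> 'a set \<Rightarrow> 'a set" where
  "hr_add_set H A B = (\<Union>a\<in>A. \<Union>b\<in>B. hr_add H a b)"

definition krasner_hyperring :: "('a, 'b) hyperring_scheme \<Rightarrow> bool" where
  "krasner_hyperring H \<longleftrightarrow>
    (let R = hr_carrier H; add = hr_add H; mult = hr_mult H;
         z = hr_zero H; e = hr_one H; neg = hr_neg H in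
     \<comment> \<open>(R, add) is a canonical hypergroup\<close>
     z \<in> R \<and>
     (\<forall>a\<in>R. \<forall>b\<in>R. add a b \<noteq> {} \<and> add a b \<subseteq> R) \<and>
     (\<forall>a\<in>R. \<forall>b\<in>R. \<forall>c\<in>R. hr_add_set H (add a b) {c} = hr_add_set H {a} (add b c)) \<and>
     (\<forall>a\<in>R. \<forall>b\<in>R. add a b = add b a) \<and>
     (\<forall>a\<in>R. add z a = {a}) \<and>
     (\<forall>a\<in>R. neg a \<in> R \<and> z \<in> add a (neg a) \<and> (\<forall>b\<in>R. z \<in> add a b \<longrightarrow> b = neg a)) \<and>
     (\<forall>a\<in>R. \<forall>b\<in>R. \<forall>c\<in>R. c \<in> add a b \<longrightarrow> b \<in> add (neg a) c \<and> a \<in> add c (neg b)) \<and>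
     \<comment> \<open>(R, mult) is a commutative semigroup with identity 1 \<noteq> 0, 0 absorbing\<close>
     (\<forall>a\<in>R. \<forall>b\<in>R. mult a b \<in> R) \<and>
     (\<forall>a\<in>R. \<forall>b\<in>R. \<forall>c\<in>R. mult (mult a b) c = mult a (mult b c)) \<and>
     (\<forall>a\<in>R. \<forall>b\<in>R. mult a b = mult b a) \<and>
     e \<in> R \<and> e \<noteq> z \<and>
     (\<forall>a\<in>R. mult e a = a) \<and>
     (\<forall>a\<in>R. mult z a = z) \<and>
     \<comment> \<open>distributivity\<close>
     (\<forall>r\<in>R. \<forall>a\<in>R. \<forall>b\<in>R. (mult r) ` (add a b) = add (mult r a) (mult r b)))"

definition hyperideal :: "('a, 'b) hyperring_scheme \<Rightarrow> 'a set \<Rightarrow> bool" where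
  "hyperideal H N \<longleftrightarrow> N \<subseteq> hr_carrier H \<and> N \<noteq> {} \<and>
     (\<forall>a\<in>N. \<forall>b\<in>N. hr_add H a (hr_neg H b) \<subseteq> N) \<and>
     (\<forall>r\<in>hr_carrier H. \<forall>a\<in>N. hr_mult H r a \<in> N)"

definition hyperideal_gen :: "('a, 'b) hyperring_scheme \<Rightarrow> 'a set \<Rightarrow> 'a set" where
  "hyperideal_gen H S = \<Inter>{N. hyperideal H N \<and> S \<subseteq> N}"

definition hyperideal_sq :: "('a, 'b) hyperring_scheme \<Rightarrow> 'a set \<Rightarrow> 'a set" where
  "hyperideal_sq H T = hyperideal_gen H {hr_mult H a b | a b. a \<in> T \<and> b \<in> T}"

definition prime_hyperideal :: "('a, 'b) hyperring_scheme \<Rightarrow> 'a set \<Rightarrow> bool" where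
  "prime_hyperideal H T \<longleftrightarrow>
     (\<forall>a\<in>hr_carrier H. \<forall>b\<in>hr_carrier H. hr_mult H a b \<in> T \<longrightarrow> a \<in> T \<or> b \<in> T)"

definition phi_prime_hyperideal ::
  "('a, 'b) hyperring_scheme \<Rightarrow> ('a set \<Rightarrow> 'a set) \<Rightarrow> 'a set \<Rightarrow> bool" where
  "phi_prime_hyperideal H \<phi> T \<longleftrightarrow>
     (\<forall>a\<in>hr_carrier H. \<forall>b\<in>hr_carrier H.
        hr_mult H a b \<in> T \<and> hr_mult H a b \<notin> \<phi> T \<longrightarrow> a \<in> T \<or> b \<in> T)"

end

theory Submission
  imports Defs
begin

text \<open>Let \<open>a, b \<notin> T\<close> with \<open>a \<circ> b \<in> T\<close>; then \<open>a \<circ> b \<in> \<phi>(T)\<close> by \<open>\<phi>\<close>-primeness, so \<open>\<phi>(T)\<close> is a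
  hyperideal. For \<open>t \<in> T\<close> any \<open>x \<in> b \<oplus> t\<close> lies outside \<open>T\<close> while \<open>a \<circ> x \<in> T\<close>, so
  \<open>a \<circ> x \<in> \<phi>(T)\<close>; as \<open>a \<circ> x \<in> a \<circ> b \<oplus> a \<circ> t\<close>, also \<open>a \<circ> t \<in> \<phi>(T)\<close>. For \<open>t, s \<in> T\<close> and
  \<open>x \<in> a \<oplus> t\<close>, \<open>y \<in> b \<oplus> s\<close> we get \<open>x, y \<notin> T\<close>, \<open>x \<circ> y \<in> T\<close>, and by the first step
  \<open>x \<circ> y \<in> \<phi>(T)\<close> iff \<open>t \<circ> s \<in> \<phi>(T)\<close>; so \<open>\<phi>\<close>-primeness gives \<open>t \<circ> s \<in> \<phi>(T)\<close>, whence
  \<open>T\<^sup>2 \<subseteq> \<phi>(T)\<close>.\<close>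

lemma hyperideal_subset_carrier: "hyperideal H I \<Longrightarrow> I \<subseteq> hr_carrier H"
  unfolding hyperideal_def by blast

lemma hyperideal_gen_least: "hyperideal H I \<Longrightarrow> S \<subseteq> I \<Longrightarrow> hyperideal_gen H S \<subseteq> I"
  unfolding hyperideal_gen_def by blast

lemma hyperideal_sq_least:
  assumes "hyperideal H I" and "\<And>t s. t \<in> T \<Longrightarrow> s \<in> T \<Longrightarrow> hr_mult H t s \<in> I"
  shows "hyperideal_sq H T \<subseteq> I"
  unfolding hyperideal_sq_def using assms by (intro hyperideal_gen_least) auto

locale reversible_hyperring =
  fixes H :: "('a, 'b) hyperring_scheme"
  assumes add_nonempty: "a \<in> hr_carrier H \<Longrightarrow> b \<in> hr_carrier H \<Longrightarrow> hr_add H a b \<noteq> {}"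
    and add_subset_carrier:
      "a \<in> hr_carrier H \<Longrightarrow> b \<in> hr_carrier H \<Longrightarrow> hr_add H a b \<subseteq> hr_carrier H"
    and add_commute: "a \<in> hr_carrier H \<Longrightarrow> b \<in> hr_carrier H \<Longrightarrow> hr_add H a b = hr_add H b a"
    and zero_add: "a \<in> hr_carrier H \<Longrightarrow> hr_add H (hr_zero H) a = {a}"
    and neg_closed: "a \<in> hr_carrier H \<Longrightarrow> hr_neg H a \<in> hr_carrier H"
    and zero_in_add_neg: "a \<in> hr_carrier H \<Longrightarrow> hr_zero H \<in> hr_add H a (hr_neg H a)"
    and neg_unique: "a \<in> hr_carrier H \<Longrightarrow> b \<in> hr_carrier H \<Longrightarrow> hr_zero H \<in> hr_add H a b
      \<Longrightarrow> b = hr_neg H a"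
    and add_reversible: "a \<in> hr_carrier H \<Longrightarrow> b \<in> hr_carrier H \<Longrightarrow> c \<in> hr_carrier H
      \<Longrightarrow> c \<in> hr_add H a b \<Longrightarrow> b \<in> hr_add H (hr_neg H a) c"
    and mult_closed: "a \<in> hr_carrier H \<Longrightarrow> b \<in> hr_carrier H \<Longrightarrow> hr_mult H a b \<in> hr_carrier H"
    and mult_commute: "a \<in> hr_carrier H \<Longrightarrow> b \<in> hr_carrier H \<Longrightarrow> hr_mult H a b = hr_mult H b a"
    and mult_image_add: "r \<in> hr_carrier H \<Longrightarrow> a \<in> hr_carrier H \<Longrightarrow> b \<in> hr_carrier H
      \<Longrightarrow> hr_mult H r ` hr_add H a b = hr_add H (hr_mult H r a) (hr_mult H r b)"

lemma krasner_hyperring_imp_reversible_hyperring: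
  "krasner_hyperring H \<Longrightarrow> reversible_hyperring H"
  unfolding krasner_hyperring_def Let_def by (elim conjE) (unfold_locales; simp_all)

context reversible_hyperring
begin

abbreviation R where "R \<equiv> hr_carrier H"
abbreviation hadd (infixl "\<oplus>" 65) where "a \<oplus> b \<equiv> hr_add H a b"
abbreviation hmult (infixl "\<otimes>" 70) where "a \<otimes> b \<equiv> hr_mult H a b"
abbreviation hzero ("\<zero>") where "\<zero> \<equiv> hr_zero H"
abbreviation hneg ("\<ominus> _" [80] 80) where "\<ominus> a \<equiv> hr_neg H a"

lemma add_closed: "a \<in> R \<Longrightarrow> b \<in> R \<Longrightarrow> c \<in> a \<oplus> b \<Longrightarrow> c \<in> R"
  using add_subset_carrier by blast

lemma mult_add_distrib_left:
  assumes "r \<in> R" "a \<in> R" "b \<in> R" "x \<in> a \<oplus> b"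
  shows "r \<otimes> x \<in> r \<otimes> a \<oplus> r \<otimes> b"
  using imageI[OF assms(4), of "hr_mult H r"] unfolding mult_image_add[OF assms(1-3)] .

lemma mult_add_distrib_right:
  assumes "r \<in> R" "a \<in> R" "b \<in> R" "x \<in> a \<oplus> b"
  shows "x \<otimes> r \<in> a \<otimes> r \<oplus> b \<otimes> r"
proof -
  have "x \<in> R" using add_closed assms(2-4) .
  then show ?thesis
    using mult_add_distrib_left[OF assms]
    by (simp only: mult_commute[OF assms(1)] mult_commute[OF assms(1-2)] mult_commute[OF assms(1,3)])
qed

lemma neg_neg: "a \<in> R \<Longrightarrow> \<ominus> \<ominus> a = a"
  by (metis add_commute neg_closed neg_unique zero_in_add_neg)

context
  fixes I assumes I: "hyperideal H I"
begin

lemma hyperideal_carrier: "a \<in> I \<Longrightarrow> a \<in> R"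
  using hyperideal_subset_carrier[OF I] by blast

lemma hyperideal_zero: "\<zero> \<in> I"
proof -
  obtain a where "a \<in> I" using I unfolding hyperideal_def by blast
  then have "a \<oplus> \<ominus> a \<subseteq> I" using I unfolding hyperideal_def by blast
  then show ?thesis using zero_in_add_neg hyperideal_carrier \<open>a \<in> I\<close> by blast
qed

lemma hyperideal_neg: "a \<in> I \<Longrightarrow> \<ominus> a \<in> I"
  using I hyperideal_zero zero_add[OF neg_closed[OF hyperideal_carrier]]
  unfolding hyperideal_def by blast

lemma hyperideal_add:
  assumes "a \<in> I" "b \<in> I" "c \<in> a \<oplus> b"
  shows "c \<in> I"
proof -
  have "a \<oplus> \<ominus> \<ominus> b \<subseteq> I"
    using I assms(1) hyperideal_neg[OF assms(2)] unfolding hyperideal_def by blast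
  then show ?thesis using assms(3) neg_neg[OF hyperideal_carrier[OF assms(2)]] by auto
qed

lemma hyperideal_mult: "r \<in> R \<Longrightarrow> a \<in> I \<Longrightarrow> r \<otimes> a \<in> I"
  using I unfolding hyperideal_def by blast

lemma hyperideal_add_mem_iff_left:
  assumes c: "c \<in> a \<oplus> b" and a: "a \<in> I" and b: "b \<in> R"
  shows "c \<in> I \<longleftrightarrow> b \<in> I"
proof
  assume "c \<in> I"
  have "b \<in> \<ominus> a \<oplus> c"
    using add_reversible[OF hyperideal_carrier[OF a] b add_closed[OF hyperideal_carrier[OF a] b c] c] .
  then show "b \<in> I" using hyperideal_add[OF hyperideal_neg[OF a] \<open>c \<in> I\<close>] by blast
next
  assume "b \<in> I"
  then show "c \<in> I" using hyperideal_add[OF a _ c] by blast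
qed

lemma hyperideal_add_mem_iff_right:
  assumes "c \<in> a \<oplus> b" "b \<in> I" "a \<in> R"
  shows "c \<in> I \<longleftrightarrow> a \<in> I"
  using hyperideal_add_mem_iff_left[OF _ assms(2,3)] assms(1)
    add_commute[OF assms(3) hyperideal_carrier[OF assms(2)]] by simp

end

context
  fixes \<phi> :: "'a set \<Rightarrow> 'a set" and T :: "'a set"
  assumes T: "hyperideal H T" and \<phi>T: "hyperideal H (\<phi> T)"
    and phi_prime: "phi_prime_hyperideal H \<phi> T"
begin

lemma phi_prime_mult_mem_phi:
  assumes a: "a \<in> R" "a \<notin> T" and b: "b \<in> R" "b \<notin> T"
    and ab: "a \<otimes> b \<in> T" "a \<otimes> b \<in> \<phi> T" and t: "t \<in> T"
  shows "a \<otimes> t \<in> \<phi> T"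
proof (rule ccontr)
  assume at: "a \<otimes> t \<notin> \<phi> T"
  have tR: "t \<in> R" using hyperideal_carrier[OF T t] .
  obtain x where x: "x \<in> b \<oplus> t" using add_nonempty[OF b(1) tR] by blast
  have xR: "x \<in> R" using add_closed[OF b(1) tR x] .
  have ax: "a \<otimes> x \<in> a \<otimes> b \<oplus> a \<otimes> t" using mult_add_distrib_left[OF a(1) b(1) tR x] .
  have "a \<otimes> x \<in> T"
    using hyperideal_add[OF T ab(1) hyperideal_mult[OF T a(1) t] ax] .
  moreover have "a \<otimes> x \<notin> \<phi> T"
    using hyperideal_add_mem_iff_left[OF \<phi>T ax ab(2) mult_closed[OF a(1) tR]] at by blast
  ultimately have "x \<in> T"
    using phi_prime a xR unfolding phi_prime_hyperideal_def by blast
  then show False using hyperideal_add_mem_iff_right[OF T x t b(1)] b(2) by blast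
qed

lemma phi_prime_sq_mem_phi:
  assumes a: "a \<in> R" "a \<notin> T" and b: "b \<in> R" "b \<notin> T"
    and ab: "a \<otimes> b \<in> T" "a \<otimes> b \<in> \<phi> T" and t: "t \<in> T" and s: "s \<in> T"
  shows "t \<otimes> s \<in> \<phi> T"
proof (rule ccontr)
  assume ts: "t \<otimes> s \<notin> \<phi> T"
  have tR: "t \<in> R" and sR: "s \<in> R" using hyperideal_carrier[OF T] t s by blast+
  obtain x where x: "x \<in> a \<oplus> t" using add_nonempty[OF a(1) tR] by blast
  obtain y where y: "y \<in> b \<oplus> s" using add_nonempty[OF b(1) sR] by blast
  have xR: "x \<in> R" and yR: "y \<in> R" using add_closed a(1) b(1) tR sR x y by blast+
  have xy: "x \<otimes> y \<in> x \<otimes> b \<oplus> x \<otimes> s" using mult_add_distrib_left[OF xR b(1) sR y] .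
  have xb: "x \<otimes> b \<in> a \<otimes> b \<oplus> t \<otimes> b" using mult_add_distrib_right[OF b(1) a(1) tR x] .
  have xs: "x \<otimes> s \<in> a \<otimes> s \<oplus> t \<otimes> s" using mult_add_distrib_right[OF sR a(1) tR x] .
  have "b \<otimes> t \<in> \<phi> T"
    using phi_prime_mult_mem_phi[OF b a _ _ t] ab mult_commute[OF a(1) b(1)] by simp
  then have tb: "t \<otimes> b \<in> \<phi> T" using mult_commute[OF b(1) tR] by simp
  have xbT: "x \<otimes> b \<in> T"
    using hyperideal_add[OF T ab(1) _ xb] hyperideal_mult[OF T b(1) t] mult_commute[OF b(1) tR]
    by simp
  have xb\<phi>: "x \<otimes> b \<in> \<phi> T" using hyperideal_add[OF \<phi>T ab(2) tb xb] .
  have xs\<phi>: "x \<otimes> s \<notin> \<phi> T"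
    using hyperideal_add_mem_iff_left[OF \<phi>T xs phi_prime_mult_mem_phi[OF a b ab s]] ts
      mult_closed[OF tR sR] by blast
  have "x \<otimes> y \<in> T" using hyperideal_add[OF T xbT hyperideal_mult[OF T xR s] xy] .
  moreover have "x \<otimes> y \<notin> \<phi> T"
    using hyperideal_add_mem_iff_left[OF \<phi>T xy xb\<phi>] xs\<phi> mult_closed[OF xR sR] by blast
  ultimately have "x \<in> T \<or> y \<in> T"
    using phi_prime xR yR unfolding phi_prime_hyperideal_def by blast
  then show False
    using hyperideal_add_mem_iff_right[OF T x t a(1)] hyperideal_add_mem_iff_right[OF T y s b(1)]
      a(2) b(2) by blast
qed

end

end

theorem mainTheorem6:
  fixes H :: "('a, 'b) hyperring_scheme"
    and \<phi> :: "'a set \<Rightarrow> 'a set"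
    and T :: "'a set"
  assumes "krasner_hyperring H"
    and "\<forall>I. hyperideal H I \<longrightarrow> (\<phi> I = {} \<or> hyperideal H (\<phi> I))"
    and "hyperideal H T"
    and "T \<noteq> hr_carrier H"
    and "phi_prime_hyperideal H \<phi> T"
    and "\<not> prime_hyperideal H T"
  shows "hyperideal_sq H T \<subseteq> \<phi> T"
proof -
  interpret reversible_hyperring H
    using assms(1) by (rule krasner_hyperring_imp_reversible_hyperring)
  obtain a b where a: "a \<in> R" "a \<notin> T" and b: "b \<in> R" "b \<notin> T" and abT: "a \<otimes> b \<in> T"
    using assms(6) unfolding prime_hyperideal_def by blast
  have ab\<phi>: "a \<otimes> b \<in> \<phi> T"
    using assms(5) a b abT unfolding phi_prime_hyperideal_def by blast
  then have \<phi>T: "hyperideal H (\<phi> T)" using assms(2,3) by blast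
  show ?thesis
    using hyperideal_sq_least[OF \<phi>T]
      phi_prime_sq_mem_phi[OF assms(3) \<phi>T assms(5) a b abT ab\<phi>] by blast
qed

end
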